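(* Let $N$ be a positive integer. For every integer $n\ge 1$, $$B_{N,n}=n!\sum_{\substack{t_1+2t_2+\cdots+nt_n=n\\ t_1,\dots,t_n\ge 0}}\frac{(t_1+\cdots+t_n)!}{t_1!\cdots t_n!}(-1)^{t_1+\cdots+t_n}\left(\frac{N!}{(N+1)!}\right)^{t_1}\left(\frac{N!}{(N+2)!}\right)^{t_2}\cdots\left(\frac{N!}{(N+n)!}\right)^{t_n},$$ and $$\frac{N!}{(N+n)!}=\det(d_{ij})_{1\le i,j\le n},$$ where $d_{ij}=(-1)^{i-j+1}\dfrac{B_{N,i-j+1}}{(i-j+1)!}$ if $j\le i$, $d_{ij}=1$ if $j=i+1$, and $d_{ij}=0$ if $j>i+1$.
   Context: For a positive integer $N$, the hypergeometric Bernoulli numbers $B_{N,n}$ ($n\ge 0$) are defined by $$\frac{x^N/N!}{e^x-\sum_{n=0}^{N-1}x^n/n!}=\sum_{n=0}^\infty B_{N,n}\frac{x^n}{n!}.$$ *)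

theory Defs
  imports "HOL-Computational_Algebra.Formal_Power_Series" "Jordan_Normal_Form.Determinant"
begin

definition hbern_fps :: "nat \<Rightarrow> real fps" where
  "hbern_fps N = (fps_const (1 / fact N) * fps_X ^ N) /
     (fps_exp 1 - (\<Sum>k<N. fps_const (1 / fact k) * fps_X ^ k))"

definition hbern :: "nat \<Rightarrow> nat \<Rightarrow> real" where
  "hbern N n = fact n * fps_nth (hbern_fps N) n"

definition weighted_compositions :: "nat \<Rightarrow> (nat \<Rightarrow> nat) set" where
  "weighted_compositions n =
     {t. (\<forall>i. i \<notin> {1..n} \<longrightarrow> t i = 0) \<and> (\<Sum>i=1..n. i * t i) = n}"

end

theory Submission
  imports Defs
begin

text \<open>Since e^x minus its Taylor polynomial of degree N - 1 equals x^N/N! times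
  A(x) = \<Sum>m. N!/(N+m)! x^m, the generating function of the B_{N,n} is 1/A(x), where A(0) = 1.
  The first identity is the expansion of 1/A = 1/(1 + (A - 1)) into powers of A - 1, combined with
  the multinomial theorem; it is obtained by checking that the right-hand sides satisfy the
  recurrence c_n = -(a_1 c_(n-1) + ... + a_n c_0) of the coefficients of 1/A. The second identity
  holds for any pair of mutually inverse series: multiplying the Hessenberg matrix built from the
  coefficients of 1/A by a unit triangular matrix clears its first column except for the entry
  \<plusminus>a_n in the last row, and Laplace expansion along that column leaves a unit
  triangular minor.\<close>

definition hessenberg_matrix :: "nat \<Rightarrow> (nat \<Rightarrow> 'a::comm_ring_1) \<Rightarrow> 'a mat" where
  "hessenberg_matrix n b = mat n n (\<lambda>(i, j).
     if j \<le> i then (-1) ^ (i - j + 1) * b (i - j + 1) else if j = i + 1 then 1 else 0)"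

lemma hessenberg_matrix_carrier [simp]: "hessenberg_matrix n b \<in> carrier_mat n n"
  and dim_row_hessenberg_matrix [simp]: "dim_row (hessenberg_matrix n b) = n"
  and dim_col_hessenberg_matrix [simp]: "dim_col (hessenberg_matrix n b) = n"
  by (simp_all add: hessenberg_matrix_def)

lemma det_mat_delete_hessenberg_matrix:
  assumes "n \<ge> 1"
  shows "det (mat_delete (hessenberg_matrix n b) (n - 1) 0) = 1"
proof -
  let ?M = "mat_delete (hessenberg_matrix n b) (n - 1) 0"
  have M: "?M \<in> carrier_mat (n - 1) (n - 1)"
    by (rule mat_delete_carrier) simp
  have entry: "?M $$ (i, j) = hessenberg_matrix n b $$ (i, j + 1)" if "i < n - 1" "j < n - 1" for i j
    using that by (simp add: mat_delete_def)
  have "det ?M = prod_list (diag_mat ?M)"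
  proof (rule det_lower_triangular[OF _ M])
    fix i j assume "i < j" "j < n - 1"
    then show "?M $$ (i, j) = 0" using entry[of i j] by (simp add: hessenberg_matrix_def)
  qed
  also have "\<dots> = 1"
    unfolding prod_list_diag_prod using M
  proof (intro prod.neutral ballI)
    fix x assume "x \<in> {0..<dim_row ?M}"
    then show "?M $$ (x, x) = 1" using M entry[of x x] by (simp add: hessenberg_matrix_def)
  qed
  finally show ?thesis .
qed

text \<open>Up to sign, row i of the Hessenberg matrix against the vector ((-1)^k f_k) is the
  coefficient of x^(i+1) in f g, except that in the last row the term k = n is cut off.\<close>
lemma hessenberg_matrix_row_sum:
  fixes f g :: "'a::comm_ring_1 fps"
  assumes inv: "f * g = 1" and g0: "fps_nth g 0 = 1" and i: "i < n"
  shows "(\<Sum>k<n. hessenberg_matrix n (fps_nth g) $$ (i, k) * ((-1) ^ k * fps_nth f k))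
           = (if i = n - 1 then (-1) ^ (n + 1) * fps_nth f n else 0)"
proof -
  define c where "c k = (if k \<le> i + 1 then fps_nth f k * fps_nth g (i + 1 - k) else 0)" for k
  have summand:
    "hessenberg_matrix n (fps_nth g) $$ (i, k) * ((-1) ^ k * fps_nth f k) = (-1) ^ (i + 1) * c k"
    if "k < n" for k
  proof (cases "k \<le> i")
    case True
    then have sign: "(-1::'a) ^ (i - k + 1) * (-1) ^ k = (-1) ^ (i + 1)"
      by (simp flip: power_add)
    have "hessenberg_matrix n (fps_nth g) $$ (i, k) * ((-1) ^ k * fps_nth f k)
        = ((-1) ^ (i - k + 1) * (-1) ^ k) * c k"
      using True that i by (simp add: hessenberg_matrix_def c_def Suc_diff_le ac_simps)
    then show ?thesis by (simp only: sign)
  qed (use that i g0 in \<open>auto simp: hessenberg_matrix_def c_def\<close>)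
  have conv: "(\<Sum>k\<le>i + 1. c k) = 0"
    using arg_cong[OF inv, of "\<lambda>h. fps_nth h (i + 1)"]
    by (simp add: fps_mult_nth c_def atLeast0AtMost)
  have "(\<Sum>k<n. hessenberg_matrix n (fps_nth g) $$ (i, k) * ((-1) ^ k * fps_nth f k))
      = (-1) ^ (i + 1) * (\<Sum>k<n. c k)"
    by (simp add: summand sum_distrib_left)
  also have "\<dots> = (if i = n - 1 then (-1) ^ (n + 1) * fps_nth f n else 0)"
  proof (cases "i = n - 1")
    case True
    then have n: "n = Suc i" using i by simp
    have "(\<Sum>k\<le>i + 1. c k) = (\<Sum>k<n. c k) + c n"
      unfolding n by (simp add: lessThan_Suc_atMost)
    moreover have "c n = fps_nth f n"
      using g0 n by (simp add: c_def)
    ultimately have "(\<Sum>k<n. c k) = - fps_nth f n"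
      using conv by (simp add: eq_neg_iff_add_eq_0)
    with True n show ?thesis by simp
  next
    case False
    then have "(\<Sum>k<n. c k) = (\<Sum>k\<le>i + 1. c k)"
      using i by (intro sum.mono_neutral_right) (auto simp: c_def)
    with False conv show ?thesis by simp
  qed
  finally show ?thesis .
qed

text \<open>Multiplying by the unit lower triangular matrix U replaces the first column of the
  Hessenberg matrix by a multiple of the last unit vector, leaving the other columns alone.\<close>
lemma det_hessenberg_matrix_inverse:
  fixes f g :: "'a::comm_ring_1 fps"
  assumes inv: "f * g = 1" and f0: "fps_nth f 0 = 1" and n: "n \<ge> 1"
  shows "det (hessenberg_matrix n (fps_nth g)) = fps_nth f n"
proof -
  let ?H = "hessenberg_matrix n (fps_nth g)"
  define U where "U = mat n n (\<lambda>(i, j).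
    if j = 0 then (-1) ^ i * fps_nth f i else if i = j then 1 else (0::'a))"
  define K where "K = ?H * U"
  have U: "U \<in> carrier_mat n n" and K: "K \<in> carrier_mat n n"
    by (auto simp: U_def K_def)
  have g0: "fps_nth g 0 = 1"
    using arg_cong[OF inv, of "\<lambda>h. fps_nth h 0"] f0 by simp
  have "det U = prod_list (diag_mat U)"
    by (rule det_lower_triangular[OF _ U]) (simp add: U_def)
  also have "\<dots> = 1"
    using f0 by (auto simp: prod_list_diag_prod U_def intro!: prod.neutral)
  finally have det_U: "det U = 1" .
  have K_first_col: "K $$ (i, 0) = (if i = n - 1 then (-1) ^ (n + 1) * fps_nth f n else 0)"
    if "i < n" for i
    using that n hessenberg_matrix_row_sum[OF inv g0 that]
    by (simp add: K_def U_def scalar_prod_def atLeast0LessThan)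
  have K_other_cols: "K $$ (i, j) = ?H $$ (i, j)" if "i < n" "j < n" "j \<ge> 1" for i j
  proof -
    have "K $$ (i, j) = (\<Sum>k<n. ?H $$ (i, k) * U $$ (k, j))"
      using that by (simp add: K_def U_def scalar_prod_def atLeast0LessThan)
    also have "\<dots> = ?H $$ (i, j)"
      using that by (simp add: U_def if_distrib[where f="\<lambda>x. _ * x"] cong: if_cong)
    finally show ?thesis .
  qed
  have minor: "mat_delete K (n - 1) 0 = mat_delete ?H (n - 1) 0"
    using K by (intro eq_matI) (auto simp: mat_delete_def K_other_cols)
  have "det ?H = det K"
    using det_mult[OF _ U, of ?H] det_U by (simp add: K_def)
  also have "\<dots> = (\<Sum>i<n. K $$ (i, 0) * cofactor K i 0)"
    using n by (intro laplace_expansion_column[OF K]) simp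
  also have "\<dots> = (-1) ^ (n + 1) * fps_nth f n * cofactor K (n - 1) 0"
    using n by (simp add: K_first_col if_distrib[where f="\<lambda>x. x * _"] cong: if_cong)
  also have "cofactor K (n - 1) 0 = (-1) ^ (n - 1)"
    unfolding cofactor_def minor det_mat_delete_hessenberg_matrix[OF n] by simp
  also have "(-1 :: 'a) ^ (n + 1) * fps_nth f n * (-1) ^ (n - 1) = (-1) ^ (2 * n) * fps_nth f n"
    using n by (simp add: ac_simps flip: power_add)
  finally show ?thesis by (simp add: power_mult)
qed

definition bounded_weighted_compositions :: "nat \<Rightarrow> nat \<Rightarrow> (nat \<Rightarrow> nat) set" where
  "bounded_weighted_compositions M n =
     {t. (\<forall>i. i \<notin> {1..M} \<longrightarrow> t i = 0) \<and> (\<Sum>i=1..M. i * t i) = n}"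

definition multinomial_term ::
    "(nat \<Rightarrow> 'a::field_char_0) \<Rightarrow> nat \<Rightarrow> (nat \<Rightarrow> nat) \<Rightarrow> 'a" where
  "multinomial_term a M t =
     fact (\<Sum>i=1..M. t i) / (\<Prod>i=1..M. fact (t i)) * (-1) ^ (\<Sum>i=1..M. t i)
       * (\<Prod>i=1..M. a i ^ t i)"

lemma bounded_weighted_compositions_le:
  assumes "t \<in> bounded_weighted_compositions M n" "i \<in> {1..M}"
  shows "i * t i \<le> n"
proof -
  have "i * t i \<le> (\<Sum>i=1..M. i * t i)"
    using assms(2) by (intro member_le_sum) auto
  then show ?thesis
    using assms(1) by (simp add: bounded_weighted_compositions_def)
qed

lemma finite_bounded_weighted_compositions: "finite (bounded_weighted_compositions M n)"
proof (rule finite_subset)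
  let ?F = "{t. \<forall>i. (i \<in> {1..M} \<longrightarrow> t i \<in> {0..n}) \<and> (i \<notin> {1..M} \<longrightarrow> t i = 0)}"
  show "bounded_weighted_compositions M n \<subseteq> ?F"
  proof safe
    fix t i assume t: "t \<in> bounded_weighted_compositions M n" and i: "i \<in> {1..M}"
    have "t i \<le> i * t i" using i by (cases i) auto
    with bounded_weighted_compositions_le[OF t i] have "t i \<le> n" by linarith
    then show "t i \<in> {0..n}" by simp
  qed (auto simp: bounded_weighted_compositions_def)
  show "finite ?F"
    by (rule finite_set_of_finite_funs) auto
qed

lemma bounded_weighted_compositions_eq:
  assumes "n \<le> M"
  shows "bounded_weighted_compositions M n = weighted_compositions n"
proof (intro equalityI subsetI)
  fix t assume t: "t \<in> bounded_weighted_compositions M n"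
  have vanish: "t i = 0" if "i \<notin> {1..n}" for i
  proof (cases "i \<in> {1..M}")
    case True
    with that have "n < i" by auto
    with bounded_weighted_compositions_le[OF t True] show ?thesis by (cases "t i") auto
  qed (use t in \<open>simp add: bounded_weighted_compositions_def\<close>)
  have "(\<Sum>i=1..M. i * t i) = (\<Sum>i=1..n. i * t i)"
    using assms vanish by (intro sum.mono_neutral_right) auto
  with t vanish show "t \<in> weighted_compositions n"
    by (simp add: bounded_weighted_compositions_def weighted_compositions_def)
next
  fix t assume t: "t \<in> weighted_compositions n"
  then have "(\<Sum>i=1..M. i * t i) = (\<Sum>i=1..n. i * t i)"
    using assms by (intro sum.mono_neutral_right) (auto simp: weighted_compositions_def)
  with t assms show "t \<in> bounded_weighted_compositions M n"
    by (auto simp: bounded_weighted_compositions_def weighted_compositions_def)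
qed

lemma multinomial_term_eq:
  assumes "\<And>i. i \<notin> {1..n} \<Longrightarrow> t i = 0" "n \<le> M"
  shows "multinomial_term a M t = multinomial_term a n t"
proof -
  have "(\<Sum>i=1..M. t i) = (\<Sum>i=1..n. t i)"
    "(\<Prod>i=1..M. fact (t i) :: 'a) = (\<Prod>i=1..n. fact (t i))"
    "(\<Prod>i=1..M. a i ^ t i) = (\<Prod>i=1..n. a i ^ t i)"
    using assms by (auto intro!: sum.mono_neutral_right prod.mono_neutral_right)
  then show ?thesis
    by (simp add: multinomial_term_def)
qed

lemma sum_fun_upd:
  assumes "finite S" "m \<in> S"
  shows "(\<Sum>i\<in>S. g i ((t(m := x)) i)) = g m x + (\<Sum>i\<in>S - {m}. g i (t i))"
proof -
  have "(\<Sum>i\<in>S - {m}. g i ((t(m := x)) i)) = (\<Sum>i\<in>S - {m}. g i (t i))"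
    by (intro sum.cong) auto
  then show ?thesis
    using sum.remove[OF assms, of "\<lambda>i. g i ((t(m := x)) i)"] by simp
qed

lemma prod_fun_upd:
  assumes "finite S" "m \<in> S"
  shows "(\<Prod>i\<in>S. g i ((t(m := x)) i)) = g m x * (\<Prod>i\<in>S - {m}. g i (t i))"
proof -
  have "(\<Prod>i\<in>S - {m}. g i ((t(m := x)) i)) = (\<Prod>i\<in>S - {m}. g i (t i))"
    by (intro prod.cong) auto
  then show ?thesis
    using prod.remove[OF assms, of "\<lambda>i. g i ((t(m := x)) i)"] by simp
qed

text \<open>Removing one part m from the composition t multiplies the multinomial coefficient by
  t m / (t_1 + ... + t_M); this is the coefficient identity behind 1/(1 + A) = 1 - A/(1 + A).\<close>
lemma multinomial_term_decrement:
  fixes a :: "nat \<Rightarrow> 'a::field_char_0"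
  assumes m: "m \<in> {1..M}" and tm: "t m \<ge> 1"
  shows "of_nat (\<Sum>i=1..M. t i) * (a m * multinomial_term a M (t(m := t m - 1)))
           = - (of_nat (t m) * multinomial_term a M t)"
proof -
  obtain j where j: "t m = Suc j" using tm by (cases "t m") auto
  let ?S = "{1..M} - {m}"
  define r where "r = (\<Sum>i\<in>?S. t i)"
  define P where "P = (\<Prod>i\<in>?S. fact (t i) :: 'a)"
  define A where "A = (\<Prod>i\<in>?S. a i ^ t i)"
  have P: "P \<noteq> 0" by (simp add: P_def)
  have upd: "(\<Sum>i=1..M. (t(m := x)) i) = x + r"
    "(\<Prod>i=1..M. fact ((t(m := x)) i)) = fact x * P"
    "(\<Prod>i=1..M. a i ^ (t(m := x)) i) = a m ^ x * A" for x
    using m unfolding r_def P_def A_def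
    by (intro sum_fun_upd[where g="\<lambda>_ y. y"] prod_fun_upd[where g="\<lambda>_ y. fact y"]
        prod_fun_upd[where g="\<lambda>i y. a i ^ y"]; simp)+
  have "t(m := t m) = t" by simp
  with upd[of "t m"] have orig: "(\<Sum>i=1..M. t i) = Suc (j + r)"
    "(\<Prod>i=1..M. fact (t i)) = fact (Suc j) * P" "(\<Prod>i=1..M. a i ^ t i) = a m ^ Suc j * A"
    unfolding j by simp_all
  have "of_nat (Suc j) * (fact (Suc (j + r)) / (fact (Suc j) * P))
      = (of_nat (Suc (j + r)) * (fact (j + r) / (fact j * P)) :: 'a)"
    using P by (simp only: fact_Suc of_nat_fact) (simp add: field_simps del: of_nat_Suc)
  moreover have "of_nat (Suc j) \<noteq> (0 :: 'a)"
    by (rule of_nat_neq_0)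
  ultimately show ?thesis
    unfolding multinomial_term_def orig upd j by (simp add: ac_simps)
qed

lemma multinomial_term_recurrence:
  fixes a :: "nat \<Rightarrow> 'a::field_char_0"
  assumes t: "t \<in> bounded_weighted_compositions M n" and n: "n \<ge> 1"
  shows "multinomial_term a M t
           = - (\<Sum>m=1..M. if t m \<ge> 1 then a m * multinomial_term a M (t(m := t m - 1)) else 0)"
    (is "_ = - ?R")
proof -
  define k where "k = (\<Sum>i=1..M. t i)"
  have "k \<noteq> 0"
  proof
    assume "k = 0"
    then have "(\<Sum>i=1..M. i * t i) = 0" by (simp add: k_def)
    with t n show False by (simp add: bounded_weighted_compositions_def)
  qed
  have "of_nat k * ?R = (\<Sum>m=1..M. - (of_nat (t m) * multinomial_term a M t))"
    unfolding sum_distrib_left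
  proof (intro sum.cong refl)
    fix m assume "m \<in> {1..M}"
    then show "of_nat k * (if t m \<ge> 1 then a m * multinomial_term a M (t(m := t m - 1)) else 0)
        = - (of_nat (t m) * multinomial_term a M t)"
      unfolding k_def using multinomial_term_decrement[of m M t a] by simp
  qed
  also have "\<dots> = of_nat k * - multinomial_term a M t"
    by (simp add: k_def sum_negf sum_distrib_right)
  finally have "of_nat k * ?R = of_nat k * - multinomial_term a M t" .
  moreover have "of_nat k \<noteq> (0 :: 'a)"
    using \<open>k \<noteq> 0\<close> by simp
  ultimately have "?R = - multinomial_term a M t"
    using mult_left_cancel by blast
  then show ?thesis by simp
qed

lemma sum_multinomial_term_decrement:
  fixes a :: "nat \<Rightarrow> 'a::field_char_0"
  assumes m: "m \<in> {1..n}"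
  shows "(\<Sum>t\<in>{t \<in> bounded_weighted_compositions n n. t m \<ge> 1}.
             multinomial_term a n (t(m := t m - 1)))
           = (\<Sum>t\<in>weighted_compositions (n - m). multinomial_term a (n - m) t)"
proof -
  have weight: "(\<Sum>i=1..n. i * (t(m := x)) i) = m * x + (\<Sum>i\<in>{1..n} - {m}. i * t i)" for t x
    using m by (rule sum_fun_upd[OF finite_atLeastAtMost])
  have "(\<Sum>t\<in>{t \<in> bounded_weighted_compositions n n. t m \<ge> 1}.
          multinomial_term a n (t(m := t m - 1)))
      = (\<Sum>s\<in>bounded_weighted_compositions n (n - m). multinomial_term a n s)"
  proof (rule sum.reindex_bij_witness
      [where i="\<lambda>s. s(m := s m + 1)" and j="\<lambda>t. t(m := t m - 1)"])
    fix t assume t: "t \<in> {t \<in> bounded_weighted_compositions n n. t m \<ge> 1}"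
    then show "(t(m := t m - 1))(m := (t(m := t m - 1)) m + 1) = t" by auto
    from t weight[of t "t m"] weight[of t "t m - 1"] m
    show "t(m := t m - 1) \<in> bounded_weighted_compositions n (n - m)"
      by (auto simp: bounded_weighted_compositions_def diff_mult_distrib2)
  next
    fix s assume s: "s \<in> bounded_weighted_compositions n (n - m)"
    then show "(s(m := s m + 1))(m := (s(m := s m + 1)) m - 1) = s" by auto
    from s weight[of s "s m"] weight[of s "s m + 1"] m
    show "s(m := s m + 1) \<in> {t \<in> bounded_weighted_compositions n n. t m \<ge> 1}"
      by (auto simp: bounded_weighted_compositions_def)
  qed simp
  also have "\<dots> = (\<Sum>s\<in>weighted_compositions (n - m). multinomial_term a (n - m) s)"
    by (auto simp: bounded_weighted_compositions_eq weighted_compositions_def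
        intro!: sum.cong multinomial_term_eq)
  finally show ?thesis .
qed

lemma sum_multinomial_term_recurrence:
  fixes a :: "nat \<Rightarrow> 'a::field_char_0"
  assumes n: "n \<ge> 1"
  shows "(\<Sum>t\<in>weighted_compositions n. multinomial_term a n t)
           = - (\<Sum>m=1..n. a m * (\<Sum>t\<in>weighted_compositions (n - m). multinomial_term a (n - m) t))"
proof -
  let ?W = "bounded_weighted_compositions n n"
  have "(\<Sum>t\<in>weighted_compositions n. multinomial_term a n t) = (\<Sum>t\<in>?W. multinomial_term a n t)"
    by (simp add: bounded_weighted_compositions_eq)
  also have "\<dots> = - (\<Sum>m=1..n. \<Sum>t\<in>?W.
      if t m \<ge> 1 then a m * multinomial_term a n (t(m := t m - 1)) else 0)"
    using n by (simp add: multinomial_term_recurrence sum_negf sum.swap[of _ ?W])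
  also have "\<dots>
      = - (\<Sum>m=1..n. a m * (\<Sum>t\<in>weighted_compositions (n - m). multinomial_term a (n - m) t))"
  proof (intro arg_cong[where f=uminus] sum.cong refl)
    fix m assume m: "m \<in> {1..n}"
    have "(\<Sum>t\<in>?W. if t m \<ge> 1 then a m * multinomial_term a n (t(m := t m - 1)) else 0)
        = a m * (\<Sum>t\<in>{t \<in> ?W. t m \<ge> 1}. multinomial_term a n (t(m := t m - 1)))"
      by (simp add: sum.inter_filter[OF finite_bounded_weighted_compositions] sum_distrib_left
          if_distrib[where f="\<lambda>x. a m * x"] cong: if_cong)
    then show "(\<Sum>t\<in>?W. if t m \<ge> 1 then a m * multinomial_term a n (t(m := t m - 1)) else 0)
        = a m * (\<Sum>t\<in>weighted_compositions (n - m). multinomial_term a (n - m) t)"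
      by (simp only: sum_multinomial_term_decrement[OF m])
  qed
  finally show ?thesis .
qed

lemma fps_inverse_nth_multinomial:
  fixes f :: "'a::field_char_0 fps"
  assumes f0: "fps_nth f 0 = 1"
  shows "fps_nth (inverse f) n = (\<Sum>t\<in>weighted_compositions n. multinomial_term (fps_nth f) n t)"
proof (induction n rule: less_induct)
  case (less n)
  show ?case
  proof (cases "n = 0")
    case True
    have "weighted_compositions 0 = {\<lambda>_. 0}"
      by (auto simp: weighted_compositions_def)
    with True f0 show ?thesis
      by (simp add: multinomial_term_def)
  next
    case False
    have "(\<Sum>i=0..n. fps_nth f i * fps_nth (inverse f) (n - i)) = 0"
      using arg_cong[OF inverse_mult_eq_1'[of f], of "\<lambda>h. fps_nth h n"] f0 False
      by (simp add: fps_mult_nth)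
    then have "fps_nth (inverse f) n = - (\<Sum>m=1..n. fps_nth f m * fps_nth (inverse f) (n - m))"
      using f0 by (simp add: sum.atLeast_Suc_atMost eq_neg_iff_add_eq_0)
    also have "\<dots> = (\<Sum>t\<in>weighted_compositions n. multinomial_term (fps_nth f) n t)"
      using False less by (simp add: sum_multinomial_term_recurrence)
    finally show ?thesis .
  qed
qed

definition exp_tail_fps :: "nat \<Rightarrow> 'a::field_char_0 fps" where
  "exp_tail_fps N = Abs_fps (\<lambda>m. fact N / fact (N + m))"

lemma fps_nth_exp_tail_fps [simp]: "fps_nth (exp_tail_fps N) m = fact N / fact (N + m)"
  by (simp add: exp_tail_fps_def)

lemma fps_exp_minus_taylor_polynomial:
  "fps_exp 1 - (\<Sum>k<N. fps_const (1 / fact k) * fps_X ^ k)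
     = fps_const (1 / fact N) * fps_X ^ N * (exp_tail_fps N :: 'a::field_char_0 fps)"
proof (rule fps_ext)
  fix m
  have "fps_nth (\<Sum>k<N. fps_const (1 / fact k) * fps_X ^ k :: 'a fps) m = (if m < N then 1 / fact m else 0)"
    by (simp add: fps_sum_nth if_distrib[where f="\<lambda>x. x / _"] sum.delta cong: if_cong)
  moreover have "fps_nth (fps_const (1 / fact N) * fps_X ^ N * exp_tail_fps N :: 'a fps) m
      = (if m < N then 0 else 1 / fact m)"
    by (simp add: mult.assoc fps_X_power_mult_nth)
  ultimately show "fps_nth (fps_exp 1 - (\<Sum>k<N. fps_const (1 / fact k) * fps_X ^ k)) m
      = fps_nth (fps_const (1 / fact N) * fps_X ^ N * exp_tail_fps N :: 'a fps) m"
    by simp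
qed

lemma hbern_fps_eq_inverse: "hbern_fps N = inverse (exp_tail_fps N)"
proof -
  have nz: "(fps_const (1 / fact N) * fps_X ^ N :: real fps) \<noteq> 0"
    by simp
  have "hbern_fps N = (fps_const (1 / fact N) * fps_X ^ N * 1)
      / (fps_const (1 / fact N) * fps_X ^ N * exp_tail_fps N)"
    unfolding hbern_fps_def fps_exp_minus_taylor_polynomial by simp
  also have "\<dots> = 1 / exp_tail_fps N"
    using nz by (rule div_mult_mult1)
  also have "\<dots> = inverse (exp_tail_fps N)"
    by (simp add: fps_divide_unit)
  finally show ?thesis .
qed

lemma hbern_hessenberg_matrix:
  "mat n n (\<lambda>(i, j).
     if j \<le> i then (-1) ^ (i - j + 1) * hbern N (i - j + 1) / fact (i - j + 1)
     else if j = i + 1 then 1 else 0) = hessenberg_matrix n (fps_nth (hbern_fps N))"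
  unfolding hessenberg_matrix_def by (intro cong_mat refl) (simp add: hbern_def)

theorem corollary2:
  fixes N n :: nat
  assumes "N \<ge> 1" and "n \<ge> 1"
  shows "hbern N n =
           fact n * (\<Sum>t\<in>weighted_compositions n.
              fact (\<Sum>i=1..n. t i) / (\<Prod>i=1..n. fact (t i))
              * (-1) ^ (\<Sum>i=1..n. t i)
              * (\<Prod>i=1..n. (fact N / fact (N + i)) ^ t i))
       \<and> fact N / fact (N + n) =
           det (mat n n (\<lambda>(i, j).
              if j \<le> i then (-1) ^ (i - j + 1) * hbern N (i - j + 1) / fact (i - j + 1)
              else if j = i + 1 then 1 else 0) :: real mat)"
proof -
  have E0: "fps_nth (exp_tail_fps N :: real fps) 0 = 1"
    by simp
  then have inv: "exp_tail_fps N * inverse (exp_tail_fps N) = (1 :: real fps)"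
    by (intro inverse_mult_eq_1') simp
  show ?thesis
    unfolding hbern_hessenberg_matrix hbern_fps_eq_inverse
      det_hessenberg_matrix_inverse[OF inv E0 \<open>n \<ge> 1\<close>]
    unfolding hbern_def hbern_fps_eq_inverse fps_inverse_nth_multinomial[OF E0]
    by (simp add: multinomial_term_def)
qed

end
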